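(* Let $q>5$ be a prime power which is either odd or a power of $4$. Then every partition of $\mathbb F_q^*$ which is preserved by $G(q)$ consists of all the cosets of some subgroup of $\mathbb F_q^*$.
   Context: $\mathbb F_q$ is the field with $q$ elements, $\mathbb F_q^*$ its multiplicative group. $G(q)$ denotes the group of permutations of $\mathbb F_q^*$ generated by all permutations of $\mathbb F_q^*$ which can be represented as $c\mapsto ac^m+bc^n$ with $a,b\in\mathbb F_q^*$ and integers $0<m<n<q$. A partition $\mathcal P$ of $\mathbb F_q^*$ is preserved by $G(q)$ if for every part $S$ of $\mathcal P$ and every $g\in G(q)$, the set $g(S)$ is also a part of $\mathcal P$. *)

theory Defs
  imports Main "HOL-Library.Disjoint_Sets"
begin

definition units_set :: "'a::field set" where
  "units_set = UNIV - {0}"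

definition binomial_perms :: "('a::{finite,field} \<Rightarrow> 'a) set" where
  "binomial_perms = {g. \<exists>a b m n. a \<noteq> 0 \<and> b \<noteq> 0 \<and> 0 < m \<and> m < n \<and> n < card (UNIV :: 'a set) \<and>
        g = (\<lambda>c. a * c ^ m + b * c ^ n) \<and> bij_betw g units_set units_set}"

text \<open>The group G(q) generated by the binomial permutations (as functions acting on the
  multiplicative group; only their values on the multiplicative group matter).\<close>
inductive_set Gq :: "('a::{finite,field} \<Rightarrow> 'a) set" where
  Gq_id: "id \<in> Gq"
| Gq_gen: "g \<in> binomial_perms \<Longrightarrow> g \<in> Gq"
| Gq_comp: "g \<in> Gq \<Longrightarrow> h \<in> Gq \<Longrightarrow> g \<circ> h \<in> Gq"
| Gq_inv: "g \<in> Gq \<Longrightarrow> inv_into units_set g \<in> Gq"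

definition preserved_by_Gq :: "'a::{finite,field} set set \<Rightarrow> bool" where
  "preserved_by_Gq P \<longleftrightarrow> (\<forall>S\<in>P. \<forall>g\<in>Gq. g ` S \<in> P)"

definition mult_subgroup :: "'a::field set \<Rightarrow> bool" where
  "mult_subgroup H \<longleftrightarrow> H \<subseteq> units_set \<and> 1 \<in> H \<and>
     (\<forall>x\<in>H. \<forall>y\<in>H. x * y \<in> H) \<and> (\<forall>x\<in>H. inverse x \<in> H)"

definition cosets_of :: "'a::field set \<Rightarrow> 'a set set" where
  "cosets_of H = {(\<lambda>x. a * x) ` H | a. a \<in> units_set}"

end

theory Submission
  imports Defs "HOL-Computational_Algebra.Polynomial" "HOL-Number_Theory.Residues"
begin

text \<open>Every multiplication \<open>c \<mapsto> l * c\<close> with \<open>l \<noteq> 0\<close> lies in G(q), and a partition of the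
  multiplicative group that is preserved by all these multiplications consists of the cosets of
  its part containing 1. For odd q and h = (q - 1)/2, the quantity \<open>c ^ h = \<plusminus>1\<close> is the
  quadratic character of c, so the binomial \<open>c \<mapsto> (u + v)/2 * c + (u - v)/2 * c ^ (h + 1)\<close>
  multiplies squares by u and non-squares by v; it permutes the group when \<open>u ^ h = v ^ h\<close> and
  \<open>u \<noteq> \<plusminus>v\<close>, and two such maps compose to \<open>c \<mapsto> l * c\<close>. For \<open>q = s ^ 2\<close> with s a power
  of 2, the maps \<open>c \<mapsto> a * c + b * c ^ s\<close> are additive and bijective as soon as
  \<open>(a / b) ^ (s + 1) \<noteq> 1\<close>, and again two of them compose to \<open>c \<mapsto> l * c\<close>.\<close>

lemma finite_field_power_card_minus_one:
  fixes x :: "'a::{finite,field}"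
  assumes "x \<noteq> 0"
  shows "x ^ (card (UNIV :: 'a set) - 1) = 1"
proof -
  have "(\<Prod>y\<in>UNIV-{0}. x * y) = (\<Prod>y\<in>UNIV-{0::'a}. y)"
    by (rule prod.reindex_bij_witness[of _ "\<lambda>y. y / x" "\<lambda>y. x * y"]) (use assms in auto)
  moreover have "(\<Prod>y\<in>UNIV-{0}. x * y) = x ^ card (UNIV - {0::'a}) * (\<Prod>y\<in>UNIV-{0::'a}. y)"
    by (simp add: prod.distrib)
  moreover have "(\<Prod>y\<in>UNIV-{0::'a}. y) \<noteq> 0"
    by simp
  ultimately show ?thesis
    by (simp add: card_Diff_singleton)
qed

lemma finite_field_power_card:
  fixes x :: "'a::{finite,field}"
  shows "x ^ card (UNIV :: 'a set) = x"
proof (cases "x = 0")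
  case False
  have "x ^ card (UNIV :: 'a set) = x * x ^ (card (UNIV :: 'a set) - 1)"
    by (simp add: finite_UNIV_card_ge_0 flip: power_Suc)
  thus ?thesis
    using finite_field_power_card_minus_one[OF False] by simp
qed (simp add: finite_UNIV_card_ge_0)

lemma card_roots_of_unity_le:
  assumes "n > 0"
  shows "card {x :: 'a::idom. x ^ n = 1} \<le> n"
proof -
  define p :: "'a poly" where "p = [:-1:] + Polynomial.monom 1 n"
  have "degree p = n"
    using assms unfolding p_def by (subst degree_add_eq_right) (auto simp: degree_monom_eq)
  moreover have "{x. x ^ n = 1} = {x. poly p x = 0}"
    by (simp add: p_def poly_monom)
  ultimately show ?thesis
    using card_poly_roots_bound[of p] assms by (metis degree_0 less_irrefl)
qed

lemma ex_nonzero_not_root_of_unity: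
  assumes "n > 0" "n + 1 < card (UNIV :: 'a set)"
  obtains x :: "'a::{finite,idom}" where "x \<noteq> 0" "x ^ n \<noteq> 1"
proof -
  have "\<exists>x::'a. x \<noteq> 0 \<and> x ^ n \<noteq> 1"
  proof (rule ccontr)
    assume "\<not> ?thesis"
    hence "card (UNIV :: 'a set) \<le> card (insert 0 {x::'a. x ^ n = 1})"
      by (intro card_mono) auto
    also have "\<dots> \<le> n + 1"
      using card_roots_of_unity_le[OF assms(1), where 'a='a] by (simp add: card_insert_if)
    finally show False
      using assms(2) by simp
  qed
  thus ?thesis
    using that by blast
qed

lemma prime_CHAR_finite:
  "prime CHAR('a::{finite,idom})"
  by (intro prime_CHAR_semidom finite_imp_CHAR_pos) simp

lemma two_eq_zero_iff_CHAR_eq_2: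
  "(2 :: 'a::ring_1) = 0 \<longleftrightarrow> CHAR('a) = 2"
proof
  assume "(2 :: 'a) = 0"
  hence "CHAR('a) dvd 2"
    using of_nat_eq_0_iff_char_dvd[of 2, where 'a='a] by simp
  thus "CHAR('a) = 2"
    using prime_nat_iff[of 2] CHAR_not_1[where 'a='a] by auto
next
  assume "CHAR('a) = 2"
  thus "(2 :: 'a) = 0"
    using of_nat_CHAR[where 'a='a] by simp
qed

lemma two_neq_zero_if_odd_card:
  assumes "odd (card (UNIV :: 'a::{finite,ring_1} set))"
  shows "(2 :: 'a) \<noteq> 0"
proof
  assume "(2 :: 'a) = 0"
  hence "CHAR('a) = 2"
    by (simp add: two_eq_zero_iff_CHAR_eq_2)
  thus False
    using CHAR_dvd_CARD[where 'a='a] assms by simp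
qed

lemma CHAR_eq_2_if_card_power_of_4:
  assumes "card (UNIV :: 'a::{finite,idom} set) = 4 ^ k"
  shows "CHAR('a) = 2"
proof -
  have "CHAR('a) dvd 2 ^ (2 * k)"
    using CHAR_dvd_CARD[where 'a='a] assms by (simp add: power_mult)
  hence "CHAR('a) dvd 2"
    by (rule prime_dvd_power[OF prime_CHAR_finite])
  thus ?thesis
    by (rule primes_dvd_imp_eq[OF prime_CHAR_finite two_is_prime_nat])
qed

lemma binomial_permsI:
  fixes a b :: "'a::{finite,field}"
  assumes "a \<noteq> 0" "b \<noteq> 0" "0 < m" "m < n" "n < card (UNIV :: 'a set)"
    and nonzero: "\<And>c. c \<noteq> 0 \<Longrightarrow> a * c ^ m + b * c ^ n \<noteq> 0"
    and inj: "\<And>c d. c \<noteq> 0 \<Longrightarrow> d \<noteq> 0 \<Longrightarrow> a * c ^ m + b * c ^ n = a * d ^ m + b * d ^ n \<Longrightarrow> c = d"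
  shows "(\<lambda>c. a * c ^ m + b * c ^ n) \<in> binomial_perms"
proof -
  let ?g = "\<lambda>c. a * c ^ m + b * c ^ n"
  have "?g ` units_set \<subseteq> units_set"
    using nonzero by (auto simp: units_set_def)
  moreover have "inj_on ?g units_set"
    using inj by (auto simp: inj_on_def units_set_def)
  ultimately have "bij_betw ?g units_set units_set"
    by (simp add: bij_betw_def endo_inj_surj[of units_set])
  thus ?thesis
    unfolding binomial_perms_def using assms(1-5) by blast
qed

lemma power_half_card_eq_1_or_minus_1:
  fixes c :: "'a::{finite,field}"
  assumes "odd (card (UNIV :: 'a set))" "c \<noteq> 0"
  shows "c ^ ((card (UNIV :: 'a set) - 1) div 2) = 1 \<or> c ^ ((card (UNIV :: 'a set) - 1) div 2) = -1"
proof -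
  have "(c ^ ((card (UNIV :: 'a set) - 1) div 2)) ^ 2 = c ^ (card (UNIV :: 'a set) - 1)"
    using assms(1) by (simp flip: power_mult)
  thus ?thesis
    using finite_field_power_card_minus_one[OF assms(2)] by (simp add: power2_eq_1_iff)
qed

definition square_class_scaling :: "'a \<Rightarrow> 'a \<Rightarrow> 'a \<Rightarrow> 'a::{finite,field}" where
  "square_class_scaling u v =
     (\<lambda>c. (u + v) / 2 * c ^ 1 + (u - v) / 2 * c ^ (1 + (card (UNIV :: 'a set) - 1) div 2))"

lemma square_class_scaling_zero: "square_class_scaling u v 0 = 0"
  by (simp add: square_class_scaling_def)

context
  fixes h :: nat and u v :: "'a::{finite,field}"
  defines "h \<equiv> (card (UNIV :: 'a set) - 1) div 2"
  assumes odd_card: "odd (card (UNIV :: 'a set))"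
begin

lemma square_class_scaling_eq:
  "square_class_scaling u v c = (u + v) / 2 * c + (u - v) / 2 * c * c ^ h"
  by (simp add: square_class_scaling_def h_def power_add mult.assoc)

lemma square_class_scaling_square:
  assumes "c ^ h = 1"
  shows "square_class_scaling u v c = u * c"
proof -
  have "square_class_scaling u v c = ((u + v) / 2 + (u - v) / 2) * c"
    unfolding square_class_scaling_eq assms by (simp only: mult_1_right distrib_right)
  also have "(u + v) / 2 + (u - v) / 2 = (2 * u) / 2"
    unfolding add_divide_distrib[symmetric] by simp
  also have "\<dots> = u"
    using two_neq_zero_if_odd_card[OF odd_card] by simp
  finally show ?thesis .
qed

lemma square_class_scaling_nonsquare:
  assumes "c ^ h = -1"
  shows "square_class_scaling u v c = v * c"
proof -
  have "square_class_scaling u v c = ((u + v) / 2 - (u - v) / 2) * c"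
    unfolding square_class_scaling_eq assms
    by (simp only: mult_minus1_right left_diff_distrib add_uminus_conv_diff)
  also have "(u + v) / 2 - (u - v) / 2 = (2 * v) / 2"
    unfolding diff_divide_distrib[symmetric] by simp
  also have "\<dots> = v"
    using two_neq_zero_if_odd_card[OF odd_card] by simp
  finally show ?thesis .
qed

lemma square_class_scaling_in_binomial_perms:
  assumes "card (UNIV :: 'a set) \<ge> 3" "u \<noteq> 0" "v \<noteq> 0" "u ^ h = v ^ h" "u \<noteq> v" "u \<noteq> -v"
  shows "square_class_scaling u v \<in> binomial_perms"
proof -
  have two: "(2 :: 'a) \<noteq> 0"
    by (rule two_neq_zero_if_odd_card[OF odd_card])
  have square_or_nonsquare: "c ^ h = 1 \<or> c ^ h = -1" if "c \<noteq> 0" for c :: 'a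
    unfolding h_def using power_half_card_eq_1_or_minus_1[OF odd_card that] .
  note scaling_values = square_class_scaling_square square_class_scaling_nonsquare
  have no_mixing: "u * c \<noteq> v * d" if "c ^ h = 1" "d ^ h = -1" for c d
  proof
    assume "u * c = v * d"
    hence "u ^ h * c ^ h = v ^ h * d ^ h"
      by (simp flip: power_mult_distrib)
    hence "u ^ h = - (v ^ h)"
      using that by simp
    hence "2 * u ^ h = 0"
      using assms(4) by simp
    thus False
      using two assms(2) by simp
  qed
  have nonzero: "square_class_scaling u v c \<noteq> 0" if "c \<noteq> 0" for c
    using square_or_nonsquare[OF that] that assms(2,3) by (elim disjE) (simp_all add: scaling_values)
  have inj: "c = d"
    if "c \<noteq> 0" "d \<noteq> 0" "square_class_scaling u v c = square_class_scaling u v d" for c d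
    using square_or_nonsquare[OF that(1)] square_or_nonsquare[OF that(2)]
  proof (elim disjE)
    assume "c ^ h = 1" "d ^ h = 1"
    thus ?thesis using that(3) assms(2) by (simp add: scaling_values)
  next
    assume "c ^ h = -1" "d ^ h = -1"
    thus ?thesis using that(3) assms(3) by (simp add: scaling_values)
  next
    assume "c ^ h = 1" "d ^ h = -1"
    thus ?thesis using that(3) no_mixing[of c d] by (simp add: scaling_values)
  next
    assume "c ^ h = -1" "d ^ h = 1"
    thus ?thesis using that(3) no_mixing[of d c] by (simp add: scaling_values)
  qed
  have coefficients: "(u + v) / 2 \<noteq> 0" "(u - v) / 2 \<noteq> 0"
    using two assms(5,6) by (simp_all add: add_eq_0_iff2)
  have exponents: "0 < (1::nat)" "1 < 1 + h" "1 + h < card (UNIV :: 'a set)"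
    using assms(1) by (auto simp: h_def)
  have unfold: "square_class_scaling u v = (\<lambda>c. (u + v) / 2 * c ^ 1 + (u - v) / 2 * c ^ (1 + h))"
    by (simp add: square_class_scaling_def h_def)
  show ?thesis
    unfolding unfold
    by (rule binomial_permsI[OF coefficients exponents nonzero[unfolded unfold] inj[unfolded unfold]])
qed

end

lemma scaling_in_Gq_odd:
  fixes l :: "'a::{finite,field}"
  assumes odd_card: "odd (card (UNIV :: 'a set))" and "card (UNIV :: 'a set) > 5" and "l \<noteq> 0"
  shows "(\<lambda>c. l * c) \<in> Gq"
proof -
  define h where "h = (card (UNIV :: 'a set) - 1) div 2"
  note scaling_lemmas = square_class_scaling_in_binomial_perms[OF odd_card, folded h_def]
    square_class_scaling_square[OF odd_card, folded h_def]
    square_class_scaling_nonsquare[OF odd_card, folded h_def]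
  obtain s :: 'a where s: "s \<noteq> 0" "s ^ 4 \<noteq> 1"
    using ex_nonzero_not_root_of_unity[of 4] assms(2) by auto
  define t where "t = s ^ 2"
  have "t ^ h = s ^ (card (UNIV :: 'a set) - 1)"
    using odd_card by (simp add: t_def h_def flip: power_mult)
  hence t_square: "t ^ h = 1"
    using finite_field_power_card_minus_one[OF s(1)] by simp
  have "t ^ 2 \<noteq> 1"
    using s(2) by (simp add: t_def flip: power_mult)
  moreover have "t \<noteq> 0"
    using s(1) by (simp add: t_def)
  ultimately have t: "t \<noteq> 0" "t \<noteq> 1" "t \<noteq> -1"
    by auto
  have Y: "square_class_scaling t 1 \<in> binomial_perms"
    using scaling_lemmas(1)[of t 1] assms(2) t t_square by simp
  have X: "square_class_scaling (l / t) l \<in> binomial_perms"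
  proof (rule scaling_lemmas(1))
    show "(l / t) ^ h = l ^ h"
      using t_square by (simp add: power_divide)
    show "l / t \<noteq> - l"
    proof
      assume "l / t = - l"
      hence "l * (t + 1) = 0"
        using t(1) by (simp add: field_simps add_eq_0_iff2)
      thus False
        using \<open>l \<noteq> 0\<close> t(3) by (simp add: add_eq_0_iff2)
    qed
  qed (use assms(2,3) t in \<open>auto simp: divide_eq_eq\<close>)
  have "square_class_scaling (l / t) l (square_class_scaling t 1 c) = l * c" for c
  proof -
    consider "c = 0" | "c ^ h = 1" | "c ^ h = -1"
      using power_half_card_eq_1_or_minus_1[OF odd_card, of c] unfolding h_def by blast
    thus ?thesis
    proof cases
      case 1
      thus ?thesis by (simp add: square_class_scaling_zero)
    next
      case 2
      moreover have "(t * c) ^ h = 1"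
        using 2 t_square by (simp add: power_mult_distrib)
      ultimately show ?thesis
        using t by (simp add: scaling_lemmas(2))
    next
      case 3
      thus ?thesis by (simp add: scaling_lemmas(3))
    qed
  qed
  hence "square_class_scaling (l / t) l \<circ> square_class_scaling t 1 = (\<lambda>c. l * c)"
    by auto
  moreover have "square_class_scaling (l / t) l \<circ> square_class_scaling t 1 \<in> Gq"
    by (rule Gq_comp[OF Gq_gen[OF X] Gq_gen[OF Y]])
  ultimately show ?thesis
    by simp
qed

lemma add_self_CHAR_2:
  fixes x :: "'a::ring_1"
  assumes "CHAR('a) = 2"
  shows "x + x = 0"
  using uminus_CHAR_2[OF assms, of x] by (simp add: add_eq_0_iff2)

lemma frobenius_binomial_in_binomial_perms:
  fixes a b :: "'a::{finite,field}"
  assumes char: "CHAR('a) = 2" and card: "card (UNIV :: 'a set) = s * s"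
    and s: "s = 2 ^ k" "k > 0" and ab: "a \<noteq> 0" "b \<noteq> 0" "(a / b) ^ (s + 1) \<noteq> 1"
  shows "(\<lambda>c. a * c + b * c ^ s) \<in> binomial_perms"
proof -
  let ?\<phi> = "\<lambda>c. a * c + b * c ^ s"
  have s_ge_2: "s \<ge> 2"
    using s by (simp add: self_le_power)
  have additive: "?\<phi> (c + d) = ?\<phi> c + ?\<phi> d" for c d
    using freshmans_dream'[where m = s and n = k, of c d] char s(1)
    by (simp add: algebra_simps)
  have kernel: "c = 0" if "?\<phi> c = 0" for c
  proof (rule ccontr)
    assume "c \<noteq> 0"
    have "b * c ^ s = a * c"
      using that uminus_CHAR_2[OF char, of "a * c"] by (simp add: add_eq_0_iff2 add.commute)
    moreover have "c ^ s = c ^ (s - 1) * c"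
      using s_ge_2 by (simp flip: power_Suc2)
    ultimately have root: "c ^ (s - 1) = a / b"
      using \<open>c \<noteq> 0\<close> ab(2) by (simp add: field_simps)
    have "(a / b) ^ (s + 1) = c ^ ((s - 1) * (s + 1))"
      by (simp only: power_mult root)
    also have "(s - 1) * (s + 1) = card (UNIV :: 'a set) - 1"
      using card s_ge_2 by (simp add: algebra_simps)
    also have "c ^ \<dots> = 1"
      by (rule finite_field_power_card_minus_one[OF \<open>c \<noteq> 0\<close>])
    finally show False
      using ab(3) by contradiction
  qed
  have "(\<lambda>c. a * c ^ 1 + b * c ^ s) \<in> binomial_perms"
  proof (rule binomial_permsI)
    show "1 < s" "s < card (UNIV :: 'a set)"
      using s_ge_2 card by auto
    show "a * c ^ 1 + b * c ^ s \<noteq> 0" if "c \<noteq> 0" for c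
      using kernel[of c] that by (simp only: power_one_right) blast
    show "c = d" if "a * c ^ 1 + b * c ^ s = a * d ^ 1 + b * d ^ s" for c d
    proof -
      have "?\<phi> (c + d) = ?\<phi> d + ?\<phi> d"
        using that additive[of c d] by simp
      also have "\<dots> = 0"
        by (rule add_self_CHAR_2[OF char])
      finally have "c + d = 0"
        by (rule kernel)
      thus "c = d"
        using uminus_CHAR_2[OF char, of d] by (simp add: add_eq_0_iff2)
    qed
  qed (simp_all add: ab)
  thus ?thesis
    by simp
qed

lemma scaling_in_Gq_char2:
  fixes l :: "'a::{finite,field}"
  assumes char: "CHAR('a) = 2" and card: "card (UNIV :: 'a set) = s * s"
    and s: "s = 2 ^ k" "k \<ge> 2" and "l \<noteq> 0"
  shows "(\<lambda>c. l * c) \<in> Gq"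
proof -
  have "s \<ge> 4"
    using s power_increasing[of 2 k "2::nat"] by simp
  moreover have "s * 4 \<le> s * s"
    using \<open>s \<ge> 4\<close> by simp
  ultimately have "s + 1 + 1 < card (UNIV :: 'a set)"
    using card by linarith
  then obtain t :: 'a where t: "t \<noteq> 0" "t ^ (s + 1) \<noteq> 1"
    using ex_nonzero_not_root_of_unity[of "s + 1"] by auto
  have t1: "t ^ (s + 1) + 1 \<noteq> 0"
  proof
    assume "t ^ (s + 1) + 1 = 0"
    hence "t ^ (s + 1) = - 1"
      by (simp add: add_eq_0_iff2)
    thus False
      using t(2) uminus_CHAR_2[OF char, of 1] by simp
  qed
  \<comment> \<open>Chosen so that the \<open>c ^ s\<close> terms of the composite below cancel (\<open>t * f = e ^ s\<close>)
    and its linear coefficient \<open>t * e + e / t ^ s\<close> is l.\<close>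
  define e where "e = l * t ^ s / (t ^ (s + 1) + 1)"
  define f where "f = e ^ s / t"
  have e: "e \<noteq> 0" "e ^ (s * s) = e"
    using \<open>l \<noteq> 0\<close> t(1) t1 finite_field_power_card[of e] card by (simp_all add: e_def)
  have "f \<noteq> 0"
    using e(1) t(1) by (simp add: f_def)
  have X: "(\<lambda>c. t * c + 1 * c ^ s) \<in> binomial_perms"
    by (rule frobenius_binomial_in_binomial_perms[OF char card s(1)]) (use s t in simp_all)
  have Y: "(\<lambda>c. e * c + f * c ^ s) \<in> binomial_perms"
  proof (rule frobenius_binomial_in_binomial_perms[OF char card s(1)])
    have "e / f = t * e / e ^ s"
      using t(1) by (simp add: f_def)
    hence "(e / f) ^ (s + 1) = t ^ (s + 1) * e ^ (s + 1) / (e ^ s) ^ (s + 1)"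
      by (simp add: power_divide power_mult_distrib)
    also have "(e ^ s) ^ (s + 1) = e ^ (s * s) * e ^ s"
      by (simp add: power_add flip: power_mult)
    also have "\<dots> = e ^ (s + 1)"
      using e(2) by simp
    finally show "(e / f) ^ (s + 1) \<noteq> 1"
      using e(1) t(2) by simp
  qed (use s e(1) \<open>f \<noteq> 0\<close> in simp_all)
  have "t * (e * c + f * c ^ s) + 1 * (e * c + f * c ^ s) ^ s = l * c" for c
  proof -
    have "(e * c + f * c ^ s) ^ s = (e * c) ^ s + (f * c ^ s) ^ s"
      by (rule freshmans_dream') (use char s(1) in simp_all)
    also have "\<dots> = e ^ s * c ^ s + f ^ s * c ^ (s * s)"
      by (simp add: power_mult_distrib power_mult)
    also have "f ^ s * c ^ (s * s) = e / t ^ s * c"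
      using e(2) finite_field_power_card[of c] card by (simp add: f_def power_divide flip: power_mult)
    finally have "t * (e * c + f * c ^ s) + 1 * (e * c + f * c ^ s) ^ s
        = (t * e + e / t ^ s) * c + (t * f * c ^ s + e ^ s * c ^ s)"
      by (simp add: algebra_simps)
    also have "t * f = e ^ s"
      using t(1) by (simp add: f_def)
    also have "e ^ s * c ^ s + e ^ s * c ^ s = 0"
      by (rule add_self_CHAR_2[OF char])
    also have "t * e + e / t ^ s = e * (t ^ (s + 1) + 1) / t ^ s"
      using t(1) by (simp add: field_simps)
    also have "\<dots> = l"
      using t(1) t1 by (simp add: e_def)
    finally show ?thesis
      by simp
  qed
  hence "(\<lambda>c. t * c + 1 * c ^ s) \<circ> (\<lambda>c. e * c + f * c ^ s) = (\<lambda>c. l * c)"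
    by (simp add: fun_eq_iff)
  moreover have "(\<lambda>c. t * c + 1 * c ^ s) \<circ> (\<lambda>c. e * c + f * c ^ s) \<in> Gq"
    by (rule Gq_comp[OF Gq_gen[OF X] Gq_gen[OF Y]])
  ultimately show ?thesis
    by simp
qed

lemma partition_eq_cosets_if_scaling_invariant:
  fixes P :: "'a::field set set"
  assumes partition: "partition_on units_set P"
    and invariant: "\<And>l S. l \<noteq> 0 \<Longrightarrow> S \<in> P \<Longrightarrow> (\<lambda>c. l * c) ` S \<in> P"
  shows "\<exists>H. mult_subgroup H \<and> P = cosets_of H"
proof -
  have parts_nonzero: "x \<noteq> 0" if "x \<in> S" "S \<in> P" for x S
    using partition that unfolding partition_on_def units_set_def by blast
  have same_part: "S = T" if "S \<in> P" "T \<in> P" "x \<in> S" "x \<in> T" for S T x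
    using partition that unfolding partition_on_def disjoint_def by blast
  have "(1 :: 'a) \<in> \<Union>P"
    using partition by (simp add: partition_on_def units_set_def)
  then obtain H where H: "H \<in> P" "1 \<in> H"
    by blast
  have scaled_H: "(\<lambda>c. x * c) ` H \<in> P" "x \<in> (\<lambda>c. x * c) ` H" if "x \<noteq> 0" for x
    using invariant[OF that H(1)] H(2) image_eqI[of x "\<lambda>c. x * c" 1 H] by simp_all
  have part_eq_coset: "S = (\<lambda>c. x * c) ` H" if "S \<in> P" "x \<in> S" for S x
    using same_part[OF that(1) scaled_H(1) that(2) scaled_H(2)] parts_nonzero[OF that(2,1)] by blast
  have "mult_subgroup H"
    unfolding mult_subgroup_def
  proof (intro conjI ballI)
    show "H \<subseteq> units_set"
      using H(1) parts_nonzero by (auto simp: units_set_def)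
    show "1 \<in> H"
      by (fact H(2))
    show "x * y \<in> H" if "x \<in> H" "y \<in> H" for x y
      using part_eq_coset[OF H(1) that(1)] that(2) by blast
    show "inverse x \<in> H" if "x \<in> H" for x
    proof -
      have "x \<noteq> 0"
        by (rule parts_nonzero[OF that H(1)])
      have "1 \<in> (\<lambda>c. inverse x * c) ` H"
        using \<open>x \<noteq> 0\<close> that image_eqI[of 1 "\<lambda>c. inverse x * c" x H] by simp
      hence "(\<lambda>c. inverse x * c) ` H = H"
        using same_part[OF scaled_H(1) H(1) _ H(2)] \<open>x \<noteq> 0\<close> by simp
      thus ?thesis
        using scaled_H(2)[of "inverse x"] \<open>x \<noteq> 0\<close> by simp
    qed
  qed
  moreover have "P = cosets_of H"
  proof
    show "P \<subseteq> cosets_of H"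
    proof
      fix S assume "S \<in> P"
      moreover obtain x where "x \<in> S"
        using partition \<open>S \<in> P\<close> unfolding partition_on_def by (metis ex_in_conv)
      ultimately show "S \<in> cosets_of H"
        using part_eq_coset parts_nonzero unfolding cosets_of_def units_set_def by blast
    qed
    show "cosets_of H \<subseteq> P"
      using scaled_H(1) unfolding cosets_of_def units_set_def by blast
  qed
  ultimately show ?thesis
    by blast
qed

lemma scaling_in_Gq:
  fixes l :: "'a::{finite,field}"
  assumes "card (UNIV :: 'a set) > 5"
    and "odd (card (UNIV :: 'a set)) \<or> (\<exists>k::nat. card (UNIV :: 'a set) = 4 ^ k)"
    and "l \<noteq> 0"
  shows "(\<lambda>c. l * c) \<in> Gq"
proof (cases "odd (card (UNIV :: 'a set))")
  case True
  show ?thesis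
    by (rule scaling_in_Gq_odd[OF True assms(1,3)])
next
  case False
  then obtain k where k: "card (UNIV :: 'a set) = 4 ^ k"
    using assms(2) by blast
  have "k \<ge> 2"
  proof (rule ccontr)
    assume "\<not> k \<ge> 2"
    hence "k = 0 \<or> k = 1"
      by auto
    thus False
      using k assms(1) by auto
  qed
  moreover have "card (UNIV :: 'a set) = 2 ^ k * 2 ^ k"
    using k by (simp flip: power_mult_distrib)
  ultimately show ?thesis
    using scaling_in_Gq_char2[OF CHAR_eq_2_if_card_power_of_4[OF k] _ refl _ assms(3)] by blast
qed

theorem corollary4p5:
  fixes P :: "'a::{finite,field} set set"
  assumes "card (UNIV :: 'a set) > 5"
    and "odd (card (UNIV :: 'a set)) \<or> (\<exists>k::nat. card (UNIV :: 'a set) = 4 ^ k)"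
    and "partition_on units_set P"
    and "preserved_by_Gq P"
  shows "\<exists>H. mult_subgroup H \<and> P = cosets_of H"
proof (rule partition_eq_cosets_if_scaling_invariant[OF assms(3)])
  fix l :: 'a and S
  assume "l \<noteq> 0" "S \<in> P"
  thus "(\<lambda>c. l * c) ` S \<in> P"
    using assms(4) scaling_in_Gq[OF assms(1,2) \<open>l \<noteq> 0\<close>] unfolding preserved_by_Gq_def by blast
qed

end
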